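(* Let $G$ be a group with a conjugation-closed generating set $X$, let $g\in\mathrm{Mon}(X)$ with $n=\ell(g)$, and let $\mathbf x\in\mathrm{Fact}(G,g,\mathbf I)$. Then the map $L$ restricts to a poset isomorphism from the lower set ${\downarrow}(\mathbf x)=\{\mathbf y\in\mathrm{Fact}(G,g,\mathbf I):\mathbf y\le\mathbf x\}$ onto the lower set ${\downarrow}(L(\mathbf x))$ in $\mathrm{Comp}(\mathbb Z,n,\mathbf I)$.
   Context: $\mathrm{Mon}(X)$ is the generated submonoid; $\ell(x)$ is the minimal length of a product of elements of $X$ equal to $x$. A linear factorization of $g$ is a row vector $[x_L\ x_1\ \cdots\ x_k\ x_R]$ ($k\ge0$) of elements of $\mathrm{Mon}(X)$ with $x_1,\dots,x_k\ne1$ ($x_L,x_R$ may be trivial), $\ell(x_L)+\sum\ell(x_i)+\ell(x_R)=\ell(g)$, $x_Lx_1\cdots x_kx_R=g$. With $x_0=x_L$, $x_{k+1}=x_R$, the merge at position $i\in\{0,\dots,k\}$ replaces consecutive entries $x_i,x_{i+1}$ by the single entry $x_ix_{i+1}$. $\mathrm{Fact}(G,g,\mathbf I)$ is the set of linear factorizations ordered by $\mathbf y\le\mathbf x$ iff $\mathbf y$ is obtained from $\mathbf x$ by a finite sequence of merges. For $G=\mathbb Z$, $X=\{1\}$ (additive notation), these are linear compositions of $n$, forming $\mathrm{Comp}(\mathbb Z,n,\mathbf I)$. $L([x_L\ x_1\cdots x_k\ x_R])=[\ell(x_L)\ \ell(x_1)\cdots\ell(x_k)\ \ell(x_R)]$.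 *)

theory Defs
  imports "HOL-Algebra.Algebra"
begin

definition mprod :: "('a, 'b) monoid_scheme \<Rightarrow> 'a list \<Rightarrow> 'a" where
  "mprod M xs = foldr (\<lambda>a b. a \<otimes>\<^bsub>M\<^esub> b) xs \<one>\<^bsub>M\<^esub>"

definition MonX :: "('a, 'b) monoid_scheme \<Rightarrow> 'a set \<Rightarrow> 'a set" where
  "MonX M S = {y. \<exists>xs. set xs \<subseteq> S \<and> y = mprod M xs}"

definition wlen :: "('a, 'b) monoid_scheme \<Rightarrow> 'a set \<Rightarrow> 'a \<Rightarrow> nat" where
  "wlen M S x = (LEAST n. \<exists>xs. set xs \<subseteq> S \<and> length xs = n \<and> mprod M xs = x)"

definition conj_closed :: "('a, 'b) monoid_scheme \<Rightarrow> 'a set \<Rightarrow> bool" where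
  "conj_closed M S \<longleftrightarrow>
     (\<forall>h\<in>carrier M. \<forall>x\<in>S. h \<otimes>\<^bsub>M\<^esub> x \<otimes>\<^bsub>M\<^esub> inv\<^bsub>M\<^esub> h \<in> S)"

(* A linear factorization [x_L x_1 ... x_k x_R] is represented as the list
   [x_L, x_1, ..., x_k, x_R] of length k + 2. *)
definition Fact :: "('a, 'b) monoid_scheme \<Rightarrow> 'a set \<Rightarrow> 'a \<Rightarrow> 'a list set" where
  "Fact M S g = {xs. 2 \<le> length xs \<and> set xs \<subseteq> MonX M S
      \<and> (\<forall>i. 0 < i \<and> i < length xs - 1 \<longrightarrow> xs ! i \<noteq> \<one>\<^bsub>M\<^esub>)
      \<and> sum_list (map (wlen M S) xs) = wlen M S g
      \<and> mprod M xs = g}"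

definition merge_at :: "('a, 'b) monoid_scheme \<Rightarrow> nat \<Rightarrow> 'a list \<Rightarrow> 'a list" where
  "merge_at M i xs = take i xs @ [xs ! i \<otimes>\<^bsub>M\<^esub> xs ! Suc i] @ drop (Suc (Suc i)) xs"

definition merge_step :: "('a, 'b) monoid_scheme \<Rightarrow> 'a list \<Rightarrow> 'a list \<Rightarrow> bool" where
  "merge_step M xs ys \<longleftrightarrow> (\<exists>i. Suc i < length xs \<and> ys = merge_at M i xs)"

definition fact_le :: "('a, 'b) monoid_scheme \<Rightarrow> 'a set \<Rightarrow> 'a \<Rightarrow> 'a list \<Rightarrow> 'a list \<Rightarrow> bool" where
  "fact_le M S g ys xs \<longleftrightarrow> ys \<in> Fact M S g \<and> xs \<in> Fact M S g \<and> (merge_step M)\<^sup>*\<^sup>* xs ys"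

definition down :: "('a, 'b) monoid_scheme \<Rightarrow> 'a set \<Rightarrow> 'a \<Rightarrow> 'a list \<Rightarrow> 'a list set" where
  "down M S g xs = {ys. fact_le M S g ys xs}"

definition Comp :: "nat \<Rightarrow> int list set" where
  "Comp n = Fact integer_group {1} (int n)"

definition comp_le :: "nat \<Rightarrow> int list \<Rightarrow> int list \<Rightarrow> bool" where
  "comp_le n = fact_le integer_group {1} (int n)"

definition comp_down :: "nat \<Rightarrow> int list \<Rightarrow> int list set" where
  "comp_down n as = down integer_group {1} (int n) as"

definition Lmap :: "('a, 'b) monoid_scheme \<Rightarrow> 'a set \<Rightarrow> 'a list \<Rightarrow> int list" where
  "Lmap M S xs = map (\<lambda>x. int (wlen M S x)) xs"

end

theory Submission
  imports Defs
begin

(* Merging only multiplies adjacent entries, so every y below x is the list of products of a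
   partition of x into consecutive nonempty blocks. Since the lengths of the entries of x already
   add up to the minimal length of g and the length is subadditive, every merge along a chain of
   factorizations adds lengths: L turns merges into merges, and merges of L(x) lift back to merges
   of x. The partition, and hence y, is recovered from L(y) because all interior entries of L(x)
   are positive. *)

lemma mprod_Nil [simp]: "mprod M [] = \<one>\<^bsub>M\<^esub>"
  by (simp add: mprod_def)

lemma mprod_Cons [simp]: "mprod M (x # xs) = x \<otimes>\<^bsub>M\<^esub> mprod M xs"
  by (simp add: mprod_def)

lemma merge_step_intro: "merge_step M (C @ a # b # D) (C @ a \<otimes>\<^bsub>M\<^esub> b # D)"
  unfolding merge_step_def merge_at_def by (intro exI[of _ "length C"]) (simp add: nth_append)

lemma merge_step_iff:
  "merge_step M xs ys \<longleftrightarrow> (\<exists>C a b D. xs = C @ a # b # D \<and> ys = C @ a \<otimes>\<^bsub>M\<^esub> b # D)"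
proof
  assume "merge_step M xs ys"
  then obtain i where i: "Suc i < length xs" "ys = merge_at M i xs"
    unfolding merge_step_def by blast
  have "xs = take i xs @ xs ! i # xs ! Suc i # drop (Suc (Suc i)) xs"
    using i(1) by (metis Cons_nth_drop_Suc Suc_lessD append_take_drop_id)
  with i(2) show "\<exists>C a b D. xs = C @ a # b # D \<and> ys = C @ a \<otimes>\<^bsub>M\<^esub> b # D"
    unfolding merge_at_def by (metis append_Cons append_Nil)
qed (auto intro: merge_step_intro)

lemma wlen_le: "set w \<subseteq> S \<Longrightarrow> wlen M S (mprod M w) \<le> length w"
  unfolding wlen_def by (rule Least_le) auto

lemma wlen_one [simp]: "wlen M S \<one>\<^bsub>M\<^esub> = 0"
  using wlen_le[of "[]" S M] by simp

lemma MonX_geodesicE: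
  assumes "x \<in> MonX M S"
  obtains w where "set w \<subseteq> S" "length w = wlen M S x" "mprod M w = x"
proof -
  have "\<exists>n w. set w \<subseteq> S \<and> length w = n \<and> mprod M w = x"
    using assms unfolding MonX_def by auto
  from LeastI_ex[OF this] show ?thesis
    using that unfolding wlen_def by blast
qed

lemma wlen_eq_0_iff: "x \<in> MonX M S \<Longrightarrow> wlen M S x = 0 \<longleftrightarrow> x = \<one>\<^bsub>M\<^esub>"
  by (metis MonX_geodesicE length_0_conv mprod_Nil wlen_one)

lemma mem_down_iff:
  "xs \<in> Fact M S g \<Longrightarrow> ys \<in> down M S g xs \<longleftrightarrow> ys \<in> Fact M S g \<and> (merge_step M)\<^sup>*\<^sup>* xs ys"
  by (auto simp: down_def fact_le_def)

lemma Fact_length: "xs \<in> Fact M S g \<Longrightarrow> 2 \<le> length xs"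
  by (simp add: Fact_def)

lemma wlen_Fact_inner_pos:
  assumes "xs \<in> Fact M S g" "0 < i" "i < length xs - 1"
  shows "0 < wlen M S (xs ! i)"
proof -
  have "xs ! i \<in> MonX M S" "xs ! i \<noteq> \<one>\<^bsub>M\<^esub>"
    using assms unfolding Fact_def by auto
  then show ?thesis
    by (metis gr0I wlen_eq_0_iff)
qed

lemma mprod_integer_group: "mprod integer_group xs = sum_list xs"
  by (induction xs) simp_all

lemma MonX_integer_group: "x \<in> MonX integer_group {1} \<longleftrightarrow> 0 \<le> x"
proof
  assume "x \<in> MonX integer_group {1}"
  then obtain w where "set w \<subseteq> {1}" "x = sum_list w"
    unfolding MonX_def by (auto simp: mprod_integer_group)
  then show "0 \<le> x"
    by (auto intro!: sum_list_nonneg)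
next
  assume "0 \<le> x"
  then have "x = mprod integer_group (replicate (nat x) 1)"
    by (simp add: mprod_integer_group sum_list_replicate)
  then show "x \<in> MonX integer_group {1}"
    unfolding MonX_def by (intro CollectI exI[of _ "replicate (nat x) 1"]) auto
qed

lemma wlen_integer_group [simp]: "wlen integer_group {1} (int m) = m"
proof -
  have "sum_list w = int (length w)" if "set w \<subseteq> {1::int}" for w
    using that by (induction w) auto
  then show ?thesis
    unfolding wlen_def mprod_integer_group
    by (intro Least_equality) (auto intro!: exI[of _ "replicate m 1"] simp: sum_list_replicate)
qed

lemma Lmap_in_Comp:
  assumes "xs \<in> Fact M S g"
  shows "Lmap M S xs \<in> Comp (wlen M S g)"
proof -
  have sum: "sum_list (map (wlen M S) xs) = wlen M S g"
    using assms by (simp add: Fact_def)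
  have inner: "\<forall>i. 0 < i \<and> i < length (Lmap M S xs) - 1 \<longrightarrow> Lmap M S xs ! i \<noteq> 0"
  proof (intro allI impI)
    fix i assume i: "0 < i \<and> i < length (Lmap M S xs) - 1"
    then have "i < length xs"
      by (auto simp: Lmap_def)
    with i show "Lmap M S xs ! i \<noteq> 0"
      using wlen_Fact_inner_pos[OF assms, of i] by (simp add: Lmap_def)
  qed
  have "mprod integer_group (Lmap M S xs) = int (wlen M S g)"
    using sum sum_list_of_nat[of "map (wlen M S) xs", where 'a=int]
    by (simp add: Lmap_def mprod_integer_group comp_def)
  with inner show ?thesis
    using Fact_length[OF assms] sum
    unfolding Comp_def Fact_def by (auto simp: Lmap_def MonX_integer_group comp_def)
qed

lemma sum_list_map_eq_if_le:
  fixes f h :: "'a \<Rightarrow> 'b::{ordered_comm_monoid_add, ordered_ab_semigroup_add_imp_le}"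
  assumes "\<forall>x\<in>set xs. f x \<le> h x" "sum_list (map f xs) = sum_list (map h xs)"
  shows "map f xs = map h xs"
  using assms
proof (induction xs)
  case (Cons x xs)
  let ?F = "sum_list (map f xs)" and ?H = "sum_list (map h xs)"
  have le: "f x \<le> h x" "?F \<le> ?H"
    using Cons.prems(1) by (auto intro: sum_list_mono)
  have total: "f x + ?F = h x + ?H"
    using Cons.prems(2) by simp
  have "h x + ?F \<le> h x + ?H"
    using le(2) by (rule add_left_mono)
  also have "\<dots> = f x + ?F"
    using total by simp
  finally have "h x \<le> f x"
    by (rule add_le_imp_le_right)
  with le(1) have "f x = h x"
    by (rule antisym)
  with Cons total show ?case
    by simp
qed simp

(* The end entries of xs may have weight 0, so a proper prefix p can weigh as much as q = xs;
   the hypothesis on u and v excludes this. *)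
lemma prefix_eq_if_weight_eq:
  fixes f :: "'a \<Rightarrow> nat"
  assumes pos: "\<And>i. 0 < i \<Longrightarrow> i < length xs - 1 \<Longrightarrow> 0 < f (xs ! i)"
    and xs: "p @ u = xs" "q @ v = xs" and le: "length p \<le> length q"
    and "p \<noteq> []" "v = [] \<Longrightarrow> u = []"
    and weight: "sum_list (map f p) = sum_list (map f q)"
  shows "p = q"
proof (rule ccontr)
  assume "p \<noteq> q"
  define r where "r = drop (length p) q"
  have q: "q = p @ r"
    using xs le unfolding r_def by (metis append_eq_append_conv_if append_take_drop_id)
  with \<open>p \<noteq> q\<close> have "r \<noteq> []" by simp
  have "v \<noteq> []"
    using xs q \<open>r \<noteq> []\<close> \<open>v = [] \<Longrightarrow> u = []\<close> by auto
  then have "length p < length xs - 1"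
    using xs q \<open>r \<noteq> []\<close> by (auto simp flip: length_greater_0_conv)
  then have "0 < f (xs ! length p)"
    using pos \<open>p \<noteq> []\<close> by simp
  moreover have "xs ! length p = hd r"
    using xs q \<open>r \<noteq> []\<close> by (auto simp: nth_append hd_conv_nth)
  moreover have "sum_list (map f r) = 0"
    using weight q by simp
  ultimately show False
    using \<open>r \<noteq> []\<close> by (cases r) auto
qed

lemma partition_eq_if_block_weights_eq:
  fixes f :: "'a \<Rightarrow> nat"
  assumes "\<And>i. 0 < i \<Longrightarrow> i < length xs - 1 \<Longrightarrow> 0 < f (xs ! i)"
    and "concat P = xs" "concat Q = xs" "[] \<notin> set P" "[] \<notin> set Q"
    and "map (\<lambda>p. sum_list (map f p)) P = map (\<lambda>q. sum_list (map f q)) Q"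
  shows "P = Q"
  using assms
proof (induction P arbitrary: Q xs)
  case (Cons p P)
  from Cons.prems(6) obtain q Q' where Q: "Q = q # Q'"
    by (cases Q) auto
  have weights: "sum_list (map f p) = sum_list (map f q)"
    "map (\<lambda>p. sum_list (map f p)) P = map (\<lambda>q. sum_list (map f q)) Q'"
    using Cons.prems(6) Q by auto
  then have "length P = length Q'"
    by (metis length_map)
  moreover have "concat P = [] \<longleftrightarrow> P = []"
    using Cons.prems(4) by (cases P) auto
  moreover have "concat Q' = [] \<longleftrightarrow> Q' = []"
    using Cons.prems(5) Q by (cases Q') auto
  ultimately have empty_iff: "concat P = [] \<longleftrightarrow> concat Q' = []"
    by auto
  have xs: "p @ concat P = xs" "q @ concat Q' = xs"
    using Cons.prems(2,3) Q by auto
  have "p = q"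
  proof (cases "length p \<le> length q")
    case True
    show ?thesis
      by (rule prefix_eq_if_weight_eq[where f = f, OF Cons.prems(1) xs True])
        (use Cons.prems(4) empty_iff weights(1) in auto)
  next
    case False
    show ?thesis
      by (rule prefix_eq_if_weight_eq[where f = f, OF Cons.prems(1) xs(2,1), symmetric])
        (use False Cons.prems(5) Q empty_iff weights(1) in auto)
  qed
  moreover have "P = Q'"
  proof (rule Cons.IH)
    show "0 < f (concat P ! i)" if "0 < i" "i < length (concat P) - 1" for i
      using Cons.prems(1)[of "length p + i"] that xs(1) by (auto simp: nth_append)
  qed (use Cons.prems Q weights \<open>p = q\<close> xs in auto)
  ultimately show ?case
    using Q by simp
qed simp

context monoid
begin

lemma mprod_closed: "set xs \<subseteq> carrier G \<Longrightarrow> mprod G xs \<in> carrier G"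
  by (induction xs) auto

lemma mprod_append:
  "set xs \<subseteq> carrier G \<Longrightarrow> set ys \<subseteq> carrier G \<Longrightarrow> mprod G (xs @ ys) = mprod G xs \<otimes> mprod G ys"
  by (induction xs) (auto simp: m_assoc mprod_closed)

lemma mprod_merge:
  "set (C @ a # b # D) \<subseteq> carrier G \<Longrightarrow> mprod G (C @ a \<otimes> b # D) = mprod G (C @ a # b # D)"
  by (simp add: mprod_append m_assoc mprod_closed)

lemma merge_steps_partition:
  assumes "set xs \<subseteq> carrier G" "(merge_step G)\<^sup>*\<^sup>* xs ys"
  obtains P where "concat P = xs" "[] \<notin> set P" "ys = map (mprod G) P"
proof -
  from assms(2) have "\<exists>P. concat P = xs \<and> [] \<notin> set P \<and> ys = map (mprod G) P"
  proof (induction rule: rtranclp_induct)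
    case base
    have "xs = map (mprod G) (map (\<lambda>x. [x]) xs)"
      using assms(1) by (induction xs) auto
    then show ?case
      by (intro exI[of _ "map (\<lambda>x. [x]) xs"]) auto
  next
    case (step ys zs)
    then obtain P where P: "concat P = xs" "[] \<notin> set P" "ys = map (mprod G) P"
      by blast
    from step(2) obtain C a b D where CD: "ys = C @ a # b # D" "zs = C @ a \<otimes> b # D"
      by (auto simp: merge_step_iff)
    from P(3) CD(1) have "map (mprod G) P = C @ a # b # D"
      by simp
    then obtain PC p q PD where
      PC: "P = PC @ p # q # PD" "C = map (mprod G) PC" "a = mprod G p" "b = mprod G q"
        "D = map (mprod G) PD"
      by (fastforce simp: map_eq_append_conv Cons_eq_map_conv)
    have "set p \<subseteq> carrier G" "set q \<subseteq> carrier G"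
      using assms(1) P(1) PC(1) by auto
    then have "zs = map (mprod G) (PC @ (p @ q) # PD)"
      using PC CD(2) by (simp add: mprod_append)
    with P PC(1) show ?case
      by (intro exI[of _ "PC @ (p @ q) # PD"]) auto
  qed
  with that show ?thesis by blast
qed

context
  fixes S :: "'a set"
  assumes S_carrier: "S \<subseteq> carrier G"
begin

lemma MonX_carrier: "MonX G S \<subseteq> carrier G"
  using S_carrier mprod_closed unfolding MonX_def by blast

lemma MonX_mult:
  assumes "x \<in> MonX G S" "y \<in> MonX G S"
  shows "x \<otimes> y \<in> MonX G S"
proof -
  obtain u v where "set u \<subseteq> S" "x = mprod G u" "set v \<subseteq> S" "y = mprod G v"
    using assms unfolding MonX_def by blast
  then have "set (u @ v) \<subseteq> S" "x \<otimes> y = mprod G (u @ v)"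
    using S_carrier by (auto simp: mprod_append)
  then show ?thesis
    unfolding MonX_def by blast
qed

lemma MonX_mprod: "set xs \<subseteq> MonX G S \<Longrightarrow> mprod G xs \<in> MonX G S"
proof (induction xs)
  case Nil
  show ?case
    unfolding MonX_def by (auto intro!: exI[of _ "[]"])
qed (simp add: MonX_mult)

lemma wlen_mult_le:
  assumes "x \<in> MonX G S" "y \<in> MonX G S"
  shows "wlen G S (x \<otimes> y) \<le> wlen G S x + wlen G S y"
proof -
  obtain u v where u: "set u \<subseteq> S" "length u = wlen G S x" "mprod G u = x"
    and v: "set v \<subseteq> S" "length v = wlen G S y" "mprod G v = y"
    using assms by (metis MonX_geodesicE)
  then have "x \<otimes> y = mprod G (u @ v)"
    using S_carrier by (auto simp: mprod_append)
  with u v show ?thesis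
    using wlen_le[of "u @ v" S G] by simp
qed

lemma wlen_mprod_le:
  "set xs \<subseteq> MonX G S \<Longrightarrow> wlen G S (mprod G xs) \<le> sum_list (map (wlen G S) xs)"
proof (induction xs)
  case (Cons x xs)
  then have "wlen G S (x \<otimes> mprod G xs) \<le> wlen G S x + wlen G S (mprod G xs)"
    by (intro wlen_mult_le) (auto simp: MonX_mprod)
  with Cons show ?case by simp
qed simp

(* The lengths of a factorization already add up to the minimum, so subadditivity of the
   length is tight at every merged pair. *)
lemma Fact_merge:
  assumes xs: "C @ a # b # D \<in> Fact G S g" and "C @ D \<noteq> []"
  shows "C @ a \<otimes> b # D \<in> Fact G S g" and "wlen G S (a \<otimes> b) = wlen G S a + wlen G S b"
proof -
  let ?w = "wlen G S"
  let ?xs = "C @ a # b # D" and ?ys = "C @ a \<otimes> b # D"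
  have MonX: "set ?xs \<subseteq> MonX G S" and sum: "sum_list (map ?w ?xs) = ?w g"
    and prod: "mprod G ?xs = g"
    using xs by (auto simp: Fact_def)
  then have ys_MonX: "set ?ys \<subseteq> MonX G S"
    by (auto intro: MonX_mult)
  have "set ?xs \<subseteq> carrier G"
    using MonX MonX_carrier by blast
  then have ys_prod: "mprod G ?ys = g"
    using prod mprod_merge by simp
  have "?w g \<le> sum_list (map ?w ?ys)"
    using wlen_mprod_le[OF ys_MonX] ys_prod by simp
  moreover have "?w (a \<otimes> b) \<le> ?w a + ?w b"
    using MonX by (intro wlen_mult_le) auto
  ultimately show additive: "?w (a \<otimes> b) = ?w a + ?w b"
    using sum by simp
  have "?ys ! j \<noteq> \<one>" if j: "0 < j" "j < length ?ys - 1" for j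
  proof -
    consider "j < length C" | "j = length C" | "length C < j"
      by linarith
    then have "0 < ?w (?ys ! j)"
    proof cases
      case 1
      then show ?thesis
        using wlen_Fact_inner_pos[OF xs, of j] j by (simp add: nth_append)
    next
      case 2
      then show ?thesis
        using wlen_Fact_inner_pos[OF xs, of j] j additive by (simp add: nth_append)
    next
      case 3
      then show ?thesis
        using wlen_Fact_inner_pos[OF xs, of "Suc j"] j by (simp add: nth_append nth_Cons')
    qed
    then show ?thesis
      by (metis less_irrefl wlen_one)
  qed
  moreover have "2 \<le> length ?ys"
    using \<open>C @ D \<noteq> []\<close> by (auto simp flip: length_greater_0_conv)
  ultimately show "?ys \<in> Fact G S g"
    using ys_MonX ys_prod sum additive unfolding Fact_def by auto
qed

lemma Fact_merge_steps:
  assumes "(merge_step G)\<^sup>*\<^sup>* xs ys" "xs \<in> Fact G S g" "2 \<le> length ys"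
  shows "ys \<in> Fact G S g \<and> (merge_step integer_group)\<^sup>*\<^sup>* (Lmap G S xs) (Lmap G S ys)"
  using assms
proof (induction rule: rtranclp_induct)
  case (step ys zs)
  from step.hyps(2) obtain C a b D where CD: "ys = C @ a # b # D" "zs = C @ a \<otimes> b # D"
    by (auto simp: merge_step_iff)
  with step have ys: "ys \<in> Fact G S g" "(merge_step integer_group)\<^sup>*\<^sup>* (Lmap G S xs) (Lmap G S ys)"
    by auto
  have "C @ D \<noteq> []"
    using step.prems(2) CD by auto
  note merged = Fact_merge[OF ys(1)[unfolded CD] this]
  have "merge_step integer_group (Lmap G S ys) (Lmap G S zs)"
    using merge_step_intro[of integer_group] merged(2) CD by (simp add: Lmap_def)
  with ys merged(1) CD show ?case
    by auto
qed simp

lemma Lmap_merge_steps_lift: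
  assumes "(merge_step integer_group)\<^sup>*\<^sup>* (Lmap G S xs) ks" "xs \<in> Fact G S g" "2 \<le> length ks"
  shows "\<exists>ys. (merge_step G)\<^sup>*\<^sup>* xs ys \<and> Lmap G S ys = ks"
  using assms(1,3)
proof (induction rule: rtranclp_induct)
  case (step ks ks')
  from step.hyps(2) obtain C a b D where CD: "ks = C @ a # b # D" "ks' = C @ (a + b) # D"
    by (auto simp: merge_step_iff)
  with step obtain ys where ys: "(merge_step G)\<^sup>*\<^sup>* xs ys" "Lmap G S ys = ks"
    by auto
  have "length ys = length ks"
    using ys(2) unfolding Lmap_def by (metis length_map)
  then have "ys \<in> Fact G S g"
    using Fact_merge_steps[OF ys(1) assms(2)] step.prems CD by simp
  from ys(2) CD(1) obtain YC y z YD where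
    Y: "ys = YC @ y # z # YD" "C = Lmap G S YC" "a = int (wlen G S y)" "b = int (wlen G S z)"
      "D = Lmap G S YD"
    by (fastforce simp: Lmap_def map_eq_append_conv Cons_eq_map_conv)
  have "YC @ YD \<noteq> []"
    using step.prems CD Y by (auto simp: Lmap_def)
  with \<open>ys \<in> Fact G S g\<close> have "wlen G S (y \<otimes> z) = wlen G S y + wlen G S z"
    unfolding Y(1) by (rule Fact_merge)
  then have "Lmap G S (YC @ y \<otimes> z # YD) = ks'"
    using CD Y by (simp add: Lmap_def)
  moreover have "(merge_step G)\<^sup>*\<^sup>* xs (YC @ y \<otimes> z # YD)"
    using rtranclp.rtrancl_into_rtrancl[OF ys(1)[unfolded Y(1)] merge_step_intro] .
  ultimately show ?case
    by blast
qed auto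

lemma wlen_mprod_blocks:
  assumes "concat P \<in> Fact G S g" "map (mprod G) P \<in> Fact G S g"
  shows "map (\<lambda>p. wlen G S (mprod G p)) P = map (\<lambda>p. sum_list (map (wlen G S) p)) P"
proof (rule sum_list_map_eq_if_le)
  show "\<forall>p\<in>set P. wlen G S (mprod G p) \<le> sum_list (map (wlen G S) p)"
    using assms(1) wlen_mprod_le by (auto simp: Fact_def)
  have "sum_list (map (wlen G S) (concat P)) =
      sum_list (map (\<lambda>p. sum_list (map (wlen G S) p)) P)"
    by (induction P) auto
  then show "sum_list (map (\<lambda>p. wlen G S (mprod G p)) P) =
      sum_list (map (\<lambda>p. sum_list (map (wlen G S) p)) P)"
    using assms by (simp add: Fact_def comp_def)
qed

lemma inj_on_Lmap_down:
  assumes xs: "xs \<in> Fact G S g"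
  shows "inj_on (Lmap G S) (down G S g xs)"
proof (rule inj_onI)
  fix ys zs
  assume "ys \<in> down G S g xs" "zs \<in> down G S g xs" and L: "Lmap G S ys = Lmap G S zs"
  then have ys: "ys \<in> Fact G S g" "(merge_step G)\<^sup>*\<^sup>* xs ys"
    and zs: "zs \<in> Fact G S g" "(merge_step G)\<^sup>*\<^sup>* xs zs"
    using mem_down_iff[OF xs] by auto
  have xs_carrier: "set xs \<subseteq> carrier G"
    using xs MonX_carrier by (auto simp: Fact_def)
  obtain P where P: "concat P = xs" "[] \<notin> set P" "ys = map (mprod G) P"
    using merge_steps_partition[OF xs_carrier ys(2)] .
  obtain Q where Q: "concat Q = xs" "[] \<notin> set Q" "zs = map (mprod G) Q"
    using merge_steps_partition[OF xs_carrier zs(2)] .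
  have wlen_Lmap: "map (wlen G S) ws = map nat (Lmap G S ws)" for ws
    by (simp add: Lmap_def)
  have "map (\<lambda>p. sum_list (map (wlen G S) p)) P = map (wlen G S) ys"
    using wlen_mprod_blocks[of P] P xs ys(1) by simp
  also have "\<dots> = map (wlen G S) zs"
    unfolding wlen_Lmap L ..
  also have "\<dots> = map (\<lambda>q. sum_list (map (wlen G S) q)) Q"
    using wlen_mprod_blocks[of Q] Q xs zs(1) by simp
  finally have "P = Q"
    using partition_eq_if_block_weights_eq[where f = "wlen G S"] wlen_Fact_inner_pos[OF xs] P Q
    by blast
  with P Q show "ys = zs"
    by simp
qed

lemma Lmap_image_down:
  assumes xs: "xs \<in> Fact G S g"
  shows "Lmap G S ` down G S g xs = comp_down (wlen G S g) (Lmap G S xs)"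
proof (intro equalityI subsetI)
  have comp_down_iff: "ks \<in> comp_down (wlen G S g) (Lmap G S xs) \<longleftrightarrow>
      ks \<in> Comp (wlen G S g) \<and> (merge_step integer_group)\<^sup>*\<^sup>* (Lmap G S xs) ks" for ks
    using mem_down_iff[OF Lmap_in_Comp[OF xs, unfolded Comp_def]]
    unfolding comp_down_def Comp_def .
  {
    fix ks
    assume "ks \<in> Lmap G S ` down G S g xs"
    then obtain ys where ys: "ys \<in> Fact G S g" "(merge_step G)\<^sup>*\<^sup>* xs ys" "ks = Lmap G S ys"
      using mem_down_iff[OF xs] by auto
    then have "(merge_step integer_group)\<^sup>*\<^sup>* (Lmap G S xs) ks"
      using Fact_merge_steps[OF ys(2) xs Fact_length[OF ys(1)]] by simp
    then show "ks \<in> comp_down (wlen G S g) (Lmap G S xs)"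
      using comp_down_iff Lmap_in_Comp[OF ys(1)] ys(3) by simp
  next
    fix ks
    assume "ks \<in> comp_down (wlen G S g) (Lmap G S xs)"
    then have ks: "ks \<in> Comp (wlen G S g)" "(merge_step integer_group)\<^sup>*\<^sup>* (Lmap G S xs) ks"
      using comp_down_iff by auto
    have "2 \<le> length ks"
      using ks(1) unfolding Comp_def by (rule Fact_length)
    then obtain ys where ys: "(merge_step G)\<^sup>*\<^sup>* xs ys" "Lmap G S ys = ks"
      using Lmap_merge_steps_lift[OF ks(2) xs] by blast
    have "2 \<le> length ys"
      using ys(2) \<open>2 \<le> length ks\<close> by (auto simp: Lmap_def)
    then have "ys \<in> Fact G S g"
      using Fact_merge_steps[OF ys(1) xs] by simp
    with ys show "ks \<in> Lmap G S ` down G S g xs"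
      using mem_down_iff[OF xs] by auto
  }
qed

lemma fact_le_iff_comp_le:
  assumes xs: "xs \<in> Fact G S g" and "ys \<in> down G S g xs" "zs \<in> down G S g xs"
  shows "fact_le G S g ys zs \<longleftrightarrow> comp_le (wlen G S g) (Lmap G S ys) (Lmap G S zs)"
proof -
  have ys: "ys \<in> Fact G S g" "(merge_step G)\<^sup>*\<^sup>* xs ys"
    and zs: "zs \<in> Fact G S g" "(merge_step G)\<^sup>*\<^sup>* xs zs"
    using assms mem_down_iff[OF xs] by auto
  have comp_le_iff: "comp_le (wlen G S g) (Lmap G S ys) (Lmap G S zs) \<longleftrightarrow>
      (merge_step integer_group)\<^sup>*\<^sup>* (Lmap G S zs) (Lmap G S ys)"
    using Lmap_in_Comp[OF ys(1)] Lmap_in_Comp[OF zs(1)]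
    by (simp add: comp_le_def fact_le_def Comp_def)
  show ?thesis
  proof
    assume "fact_le G S g ys zs"
    then have "(merge_step G)\<^sup>*\<^sup>* zs ys"
      by (simp add: fact_le_def)
    then show "comp_le (wlen G S g) (Lmap G S ys) (Lmap G S zs)"
      using Fact_merge_steps[OF _ zs(1) Fact_length[OF ys(1)]] comp_le_iff by simp
  next
    assume "comp_le (wlen G S g) (Lmap G S ys) (Lmap G S zs)"
    moreover have "2 \<le> length (Lmap G S ys)"
      using Fact_length[OF ys(1)] by (simp add: Lmap_def)
    ultimately obtain ys' where ys': "(merge_step G)\<^sup>*\<^sup>* zs ys'" "Lmap G S ys' = Lmap G S ys"
      using Lmap_merge_steps_lift[OF _ zs(1)] comp_le_iff by blast
    have "length ys' = length ys"
      using ys'(2) unfolding Lmap_def by (metis length_map)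
    then have "ys' \<in> Fact G S g"
      using Fact_merge_steps[OF ys'(1) zs(1)] Fact_length[OF ys(1)] by simp
    moreover have "(merge_step G)\<^sup>*\<^sup>* xs ys'"
      using zs(2) ys'(1) by (rule rtranclp_trans)
    ultimately have "ys' = ys"
      using inj_on_Lmap_down[OF xs] assms(2) ys'(2) mem_down_iff[OF xs] by (auto dest: inj_onD)
    with ys(1) zs(1) ys'(1) show "fact_le G S g ys zs"
      by (simp add: fact_le_def)
  qed
qed

end

end

theorem lemma3p10:
  fixes G (structure) and S :: "'a set" and g :: 'a and xs :: "'a list"
  assumes "group G"
    and "S \<subseteq> carrier G"
    and "generate G S = carrier G"
    and "conj_closed G S"
    and "g \<in> MonX G S"
    and "n = wlen G S g"
    and "xs \<in> Fact G S g"
  shows "bij_betw (Lmap G S) (down G S g xs) (comp_down n (Lmap G S xs))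
    \<and> (\<forall>ys\<in>down G S g xs. \<forall>zs\<in>down G S g xs.
          fact_le G S g ys zs \<longleftrightarrow> comp_le n (Lmap G S ys) (Lmap G S zs))"
proof -
  interpret monoid G
    using assms(1) by (rule group.is_monoid)
  have "bij_betw (Lmap G S) (down G S g xs) (comp_down n (Lmap G S xs))"
    unfolding bij_betw_def assms(6)
    using inj_on_Lmap_down[OF assms(2,7)] Lmap_image_down[OF assms(2,7)] by simp
  moreover have "\<forall>ys\<in>down G S g xs. \<forall>zs\<in>down G S g xs.
      fact_le G S g ys zs \<longleftrightarrow> comp_le n (Lmap G S ys) (Lmap G S zs)"
    unfolding assms(6) using fact_le_iff_comp_le[OF assms(2,7)] by simp
  ultimately show ?thesis ..
qed

end
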